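(* Let $F$ be an algebraically closed field, $m\geq 2$, $\beta=(m+\sqrt{m^2-4})/2$, and let $\mathbf d=(d_1,d_2)$ and $\mathbf e=(e_1,e_2)\neq(0,0)$ be pairs of non-negative integers with $\mathbf e\leq\mathbf d$ componentwise. If $d_2>\beta d_1$ and $\mathbf e\hookrightarrow\mathbf d$ (for the quiver $K(m)$), then $e_2>\beta e_1$.
   Context: $K(m)$ is the quiver with two vertices $1,2$ and $m$ arrows from $1$ to $2$; a representation of dimension vector $(d_1,d_2)$ is a tuple of linear maps $f_1,\ldots,f_m:V_1\to V_2$ with $\dim V_i=d_i$, and a subrepresentation of dimension vector $(e_1,e_2)$ is a pair of subspaces $U_1\subset V_1,U_2\subset V_2$ of dimensions $e_1,e_2$ with $f_k(U_1)\subset U_2$ for all $k$. One writes $\mathbf e\hookrightarrow\mathbf d$ if every representation of dimension vector $\mathbf d$ (equivalently, a general one, in the Zariski topology on the affine space of such representations) admits a subrepresentation of dimension vector $\mathbf e$. *)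

theory Defs
  imports Complex_Main "HOL-Library.Function_Algebras"
begin

class alg_closed_field = field +
  assumes alg_closed: "0 < n \<Longrightarrow> c n \<noteq> 0 \<Longrightarrow> \<exists>x. (\<Sum>i\<le>n. c i * x ^ i) = 0"

text \<open>The coordinate space F^n, realised as functions nat => F vanishing from index n on.
  Vector space structure: pointwise addition, scalar multiplication below.\<close>
definition fscale :: "'a::field \<Rightarrow> (nat \<Rightarrow> 'a) \<Rightarrow> (nat \<Rightarrow> 'a)" where
  "fscale c v = (\<lambda>i. c * v i)"

definition coord_space :: "nat \<Rightarrow> (nat \<Rightarrow> 'a::field) set" where
  "coord_space n = {v. \<forall>i\<ge>n. v i = 0}"

text \<open>A linear map F^p -> F^q given by a q x p matrix A (entries A i j, i<q, j<p).\<close>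
definition mat_apply :: "nat \<Rightarrow> nat \<Rightarrow> (nat \<Rightarrow> nat \<Rightarrow> 'a::field) \<Rightarrow> (nat \<Rightarrow> 'a) \<Rightarrow> (nat \<Rightarrow> 'a)" where
  "mat_apply q p A v = (\<lambda>i. if i < q then (\<Sum>j<p. A i j * v j) else 0)"

definition subspace_of_dim :: "nat \<Rightarrow> nat \<Rightarrow> (nat \<Rightarrow> 'a::field) set \<Rightarrow> bool" where
  "subspace_of_dim n e U \<longleftrightarrow> U \<subseteq> coord_space n \<and> module.subspace fscale U
      \<and> vector_space.dim fscale U = e"

text \<open>A representation of K(m) of dimension vector (d1,d2): m matrices f k (k<m), each d2 x d1.
  It has a subrepresentation of dimension vector (e1,e2).\<close>
definition has_subrep :: "nat \<Rightarrow> nat \<times> nat \<Rightarrow> (nat \<Rightarrow> nat \<Rightarrow> nat \<Rightarrow> 'a::field) \<Rightarrow> nat \<times> nat \<Rightarrow> bool" where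
  "has_subrep m d f e \<longleftrightarrow>
     (\<exists>U1 U2. subspace_of_dim (fst d) (fst e) U1 \<and> subspace_of_dim (snd d) (snd e) U2 \<and>
        (\<forall>k<m. \<forall>u\<in>U1. mat_apply (snd d) (fst d) (f k) u \<in> U2))"

text \<open>e \<hookrightarrow> d for K(m) over the field 'a: every representation of dimension vector d
  has a subrepresentation of dimension vector e.  Only the entries f k i j with k<m,
  i<d2, j<d1 matter.\<close>
definition embeds :: "'a::field itself \<Rightarrow> nat \<Rightarrow> nat \<times> nat \<Rightarrow> nat \<times> nat \<Rightarrow> bool" where
  "embeds _ m e d \<longleftrightarrow> (\<forall>f :: nat \<Rightarrow> nat \<Rightarrow> nat \<Rightarrow> 'a. has_subrep m d f e)"

end

theory Submission
  imports Defs
begin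

text \<open>Call linear maps f_0, ..., f_(m-1) : F^a \<rightarrow> F^b \<beta>-expanding if every nonzero
  subspace W of F^a satisfies \<beta> dim W < dim (f_0 W + ... + f_(m-1) W). Such maps have no
  subrepresentation of dimension vector (e_1, e_2) with e_1 > 0 and e_2 \<le> \<beta> e_1, so it suffices
  to construct \<beta>-expanding maps whenever b > \<beta> a.

  This is done by induction on a, following the reflection functor. Put \<kappa> = m a - b, so that
  \<beta> \<kappa> < a because \<beta> (m - \<beta>) = 1. Expanding maps g_k : F^\<kappa> \<rightarrow> F^a embed F^\<kappa> into
  (F^a)^m = F^(m a); choose \<Phi> : F^(m a) \<rightarrow> F^b whose kernel lies in that image and let f_k be
  \<Phi> restricted to the k-th block. For a nonzero subspace U of F^a of dimension e, the sum of
  the f_k U is \<Phi>(U^m), of dimension at least m e - dim N with N = U^m \<inter> ker \<Phi>. Now N embeds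
  into the g-preimage W of U, and \<beta> dim W < e by expansion of g, so
  dim N < e / \<beta> = (m - \<beta>) e, and the sum has dimension > \<beta> e.

  The argument works over any field.\<close>

text \<open>The space nat \<Rightarrow> 'a is infinite-dimensional, so the library theory of finite-dimensional
  vector spaces does not apply; the lemmas below are its counterparts for finitely spanned sets.
  The prefix local is needed because the global interpretation real_vector also exports fin_dim.\<close>

context vector_space
begin

abbreviation fin_dim :: "'b set \<Rightarrow> bool" where
  "fin_dim S \<equiv> \<exists>W. finite W \<and> S \<subseteq> span W"

lemma fin_dim_basis:
  assumes "local.fin_dim S"
  obtains B where "finite B" "B \<subseteq> S" "local.independent B" "S \<subseteq> span B" "card B = dim S"
proof -
  obtain W where W: "finite W" "S \<subseteq> span W"
    using assms by blast
  obtain B where B: "B \<subseteq> S" "local.independent B" "S \<subseteq> span B" "card B = dim S"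
    using basis_exists by blast
  have "finite B"
    using independent_span_bound[OF W(1) B(2)] B(1) W(2) by blast
  with B show thesis
    by (intro that)
qed

lemma dim_mono_fin_dim:
  assumes "S \<subseteq> span T" "local.fin_dim T"
  shows "dim S \<le> dim T"
proof -
  obtain B where B: "finite B" "T \<subseteq> span B" "card B = dim T"
    using fin_dim_basis[OF assms(2)] by metis
  have "S \<subseteq> span B"
    using assms(1) span_mono[OF B(2)] by (simp add: local.span_span)
  then show ?thesis
    using dim_le_card B by metis
qed

lemma card_le_dim_fin_dim:
  assumes "local.independent B" "B \<subseteq> S" "local.fin_dim S"
  shows "card B \<le> dim S"
proof -
  obtain D where D: "finite D" "S \<subseteq> span D" "card D = dim S"
    using fin_dim_basis[OF assms(3)] by metis
  show ?thesis
    using independent_span_bound[OF D(1) assms(1)] assms(2) D by auto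
qed

lemma dim_eq_0_fin_dim:
  assumes "local.fin_dim S"
  shows "dim S = 0 \<longleftrightarrow> S \<subseteq> {0}"
proof
  assume "dim S = 0"
  moreover obtain B where "finite B" "S \<subseteq> span B" "card B = dim S"
    using fin_dim_basis[OF assms] by metis
  ultimately show "S \<subseteq> {0}"
    by simp
next
  assume "S \<subseteq> {0}"
  then show "dim S = 0"
    using dim_le_card[of S "{}"] by simp
qed

end

context vector_space_pair
begin

lemma fin_dim_image:
  assumes "Vector_Spaces.linear s1 s2 f" "vs1.fin_dim S"
  shows "vs2.fin_dim (f ` S)"
proof -
  obtain W where "finite W" "S \<subseteq> vs1.span W"
    using assms(2) by blast
  then have "finite (f ` W)" "f ` S \<subseteq> vs2.span (f ` W)"
    using linear_span_image[OF assms(1)] by auto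
  then show ?thesis
    by blast
qed

lemma dim_image_le_fin_dim:
  assumes "Vector_Spaces.linear s1 s2 f" "vs1.fin_dim S"
  shows "vs2.dim (f ` S) \<le> vs1.dim S"
proof -
  obtain B where B: "finite B" "S \<subseteq> vs1.span B" "card B = vs1.dim S"
    using vs1.fin_dim_basis[OF assms(2)] by metis
  have "f ` S \<subseteq> vs2.span (f ` B)"
    using B(2) linear_span_image[OF assms(1)] by auto
  then have "vs2.dim (f ` S) \<le> card (f ` B)"
    using vs2.dim_le_card B(1) by blast
  also have "\<dots> \<le> card B"
    using card_image_le B(1) by blast
  finally show ?thesis
    using B(3) by simp
qed

lemma dim_le_dim_image_plus_dim_kernel:
  assumes f: "Vector_Spaces.linear s1 s2 f" and S: "vs1.subspace S" "vs1.fin_dim S"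
  shows "vs1.dim S \<le> vs2.dim (f ` S) + vs1.dim {x\<in>S. f x = 0}"
proof -
  let ?N = "{x\<in>S. f x = 0}"
  obtain B where B: "finite B" "?N \<subseteq> vs1.span B" "card B = vs1.dim ?N"
    using vs1.fin_dim_basis[of ?N] S(2) by (metis (no_types, lifting) mem_Collect_eq subsetI subset_trans)
  obtain E where E: "finite E" "E \<subseteq> f ` S" "f ` S \<subseteq> vs2.span E" "card E = vs2.dim (f ` S)"
    using vs2.fin_dim_basis[OF local.fin_dim_image[OF f S(2)]] by metis
  obtain s where s: "\<And>y. y \<in> E \<Longrightarrow> s y \<in> S \<and> f (s y) = y"
    using E(2) by (metis f_inv_into_f inv_into_into subsetD)
  have "S \<subseteq> vs1.span (B \<union> s ` E)"
  proof
    fix x assume x: "x \<in> S"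
    have "f x \<in> vs2.span (f ` s ` E)"
      using x E(3) s by (auto simp: image_image cong: image_cong)
    then obtain y where y: "y \<in> vs1.span (s ` E)" "f x = f y"
      using linear_span_image[OF f] by auto
    have "y \<in> S"
      using vs1.span_minimal[of "s ` E" S] s S(1) y(1) by auto
    then have "x - y \<in> vs1.span B"
      using x y B(2) linear_diff[OF f] vs1.subspace_diff[OF S(1)] by auto
    then have "x - y + y \<in> vs1.span (B \<union> s ` E)"
      using y(1) vs1.span_mono[of B "B \<union> s ` E"] vs1.span_mono[of "s ` E" "B \<union> s ` E"]
      by (intro vs1.span_add) auto
    then show "x \<in> vs1.span (B \<union> s ` E)"
      by simp
  qed
  then have "vs1.dim S \<le> card (B \<union> s ` E)"
    using vs1.dim_le_card B(1) E(1) by blast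
  also have "\<dots> \<le> card B + card E"
    using card_Un_le[of B "s ` E"] card_image_le[OF E(1), of s] by linarith
  finally show ?thesis
    using B(3) E(4) by simp
qed

lemma subspace_common_preimage:
  assumes U: "vs2.subspace U" and C: "vs1.subspace C"
    and h: "\<And>k. k < m \<Longrightarrow> Vector_Spaces.linear s1 s2 (h k)"
  shows "vs1.subspace {v \<in> C. \<forall>k<m. h k v \<in> U}"
  unfolding vs1.subspace_def
proof (intro conjI ballI allI)
  show "0 \<in> {v \<in> C. \<forall>k<m. h k v \<in> U}"
    using vs2.subspace_0[OF U] vs1.subspace_0[OF C] linear_0[OF h] by auto
  fix x y assume "x \<in> {v \<in> C. \<forall>k<m. h k v \<in> U}" "y \<in> {v \<in> C. \<forall>k<m. h k v \<in> U}"
  then show "x + y \<in> {v \<in> C. \<forall>k<m. h k v \<in> U}"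
    using vs2.subspace_add[OF U] vs1.subspace_add[OF C] linear_add[OF h] by auto
next
  fix c x assume "x \<in> {v \<in> C. \<forall>k<m. h k v \<in> U}"
  then show "c *a x \<in> {v \<in> C. \<forall>k<m. h k v \<in> U}"
    using vs2.subspace_scale[OF U] vs1.subspace_scale[OF C] linear_scale[OF h] by auto
qed

lemma linear_eq_0_in_span_Un:
  assumes f: "Vector_Spaces.linear s1 s2 f" and C: "finite C" "inj_on f C" "vs2.independent (f ` C)"
    and B: "\<And>b. b \<in> B \<Longrightarrow> f b = 0" and x: "x \<in> vs1.span (B \<union> C)" "f x = 0"
  shows "x \<in> vs1.span B"
proof -
  obtain y z where yz: "x = y + z" "y \<in> vs1.span B" "z \<in> vs1.span C"
    using x(1) unfolding vs1.span_Un by blast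
  have "f y = 0"
    using linear_eq_0_on_span[OF f _ yz(2)] B by blast
  then have "f z = 0"
    using x(2) yz(1) linear_add[OF f] by simp
  then have "z = 0"
    using linear_indep_image_lemma[OF f C(1,3,2) yz(3)] by simp
  then show ?thesis
    using yz by simp
qed

end

interpretation V: vector_space "fscale :: 'a::field \<Rightarrow> (nat \<Rightarrow> 'a) \<Rightarrow> (nat \<Rightarrow> 'a)"
  by unfold_locales (auto simp: fscale_def fun_eq_iff algebra_simps)

interpretation VP: vector_space_pair "fscale :: 'a::field \<Rightarrow> (nat \<Rightarrow> 'a) \<Rightarrow> (nat \<Rightarrow> 'a)" fscale
  by unfold_locales

abbreviation lin :: "((nat \<Rightarrow> 'a::field) \<Rightarrow> (nat \<Rightarrow> 'a)) \<Rightarrow> bool" where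
  "lin \<equiv> Vector_Spaces.linear fscale fscale"

lemma fscale_apply [simp]: "fscale c v i = c * v i"
  by (simp add: fscale_def)

lemma linI:
  assumes "\<And>u v. f (u + v) = f u + f v" "\<And>c v. f (fscale c v) = fscale c (f v)"
  shows "lin f"
  using assms by (simp add: Vector_Spaces.linear_iff V.vector_space_axioms)

lemma sum_fun_apply: "(\<Sum>x\<in>A. f x) i = (\<Sum>x\<in>A. f x i)"
  for f :: "'b \<Rightarrow> nat \<Rightarrow> 'a::comm_monoid_add"
  by (induction A rule: infinite_finite_induct) auto

definition unit_vec :: "nat \<Rightarrow> nat \<Rightarrow> 'a::zero_neq_one" where
  "unit_vec j = (\<lambda>i. if i = j then 1 else 0)"

lemma inj_unit_vec: "inj unit_vec"
  by (auto simp: inj_on_def unit_vec_def fun_eq_iff)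

lemma sum_scaled_unit_vec:
  "finite J \<Longrightarrow> (\<Sum>j\<in>J. fscale (c j) (unit_vec j)) = (\<lambda>i. if i \<in> J then c i else (0::'a::field))"
  by (auto simp: fun_eq_iff sum_fun_apply unit_vec_def if_distrib cong: if_cong)

lemma independent_unit_vec:
  assumes "finite J"
  shows "V.independent (unit_vec ` J :: (nat \<Rightarrow> 'a::field) set)"
proof (rule V.independent_if_scalars_zero)
  fix c :: "(nat \<Rightarrow> 'a) \<Rightarrow> 'a" and v :: "nat \<Rightarrow> 'a"
  assume "(\<Sum>v\<in>unit_vec ` J. fscale (c v) v) = 0" and v: "v \<in> unit_vec ` J"
  then have sum: "(\<Sum>j\<in>J. fscale (c (unit_vec j)) (unit_vec j)) = (0 :: nat \<Rightarrow> 'a)"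
    by (simp add: sum.reindex[OF inj_on_subset[OF inj_unit_vec]])
  obtain j where "j \<in> J" "v = unit_vec j"
    using v by blast
  then show "c v = 0"
    using fun_cong[OF sum, of j] assms by (simp add: sum_scaled_unit_vec)
qed (use assms in simp)

lemma subspace_coord_space: "V.subspace (coord_space n)"
  by (auto simp: V.subspace_def coord_space_def)

lemma coord_space_expand:
  "v \<in> coord_space n \<Longrightarrow> v = (\<Sum>j<n. fscale (v j) (unit_vec j :: nat \<Rightarrow> 'a::field))"
  by (auto simp: fun_eq_iff sum_scaled_unit_vec coord_space_def)

lemma coord_space_eq_span: "coord_space n = V.span (unit_vec ` {..<n} :: (nat \<Rightarrow> 'a::field) set)"
proof
  show "coord_space n \<subseteq> V.span (unit_vec ` {..<n} :: (nat \<Rightarrow> 'a) set)"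
  proof
    fix v :: "nat \<Rightarrow> 'a" assume "v \<in> coord_space n"
    then have "v = (\<Sum>j<n. fscale (v j) (unit_vec j))"
      by (rule coord_space_expand)
    also have "\<dots> \<in> V.span (unit_vec ` {..<n})"
      by (intro V.span_sum V.span_scale V.span_base) auto
    finally show "v \<in> V.span (unit_vec ` {..<n})" .
  qed
  show "V.span (unit_vec ` {..<n} :: (nat \<Rightarrow> 'a) set) \<subseteq> coord_space n"
    by (rule V.span_minimal[OF _ subspace_coord_space]) (auto simp: coord_space_def unit_vec_def)
qed

lemma fin_dim_subset_coord_space: "S \<subseteq> coord_space n \<Longrightarrow> V.fin_dim (S :: (nat \<Rightarrow> 'a::field) set)"
  using coord_space_eq_span[where 'a='a, of n] by blast

lemma dim_coord_space: "V.dim (coord_space n :: (nat \<Rightarrow> 'a::field) set) = n"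
proof -
  have "V.dim (coord_space n :: (nat \<Rightarrow> 'a) set) = card (unit_vec ` {..<n} :: (nat \<Rightarrow> 'a) set)"
    by (rule V.basis_card_eq_dim[symmetric])
      (auto simp: coord_space_eq_span V.span_superset independent_unit_vec)
  also have "\<dots> = n"
    by (simp add: card_image inj_on_subset[OF inj_unit_vec])
  finally show ?thesis .
qed

lemma dim_zero_space: "V.dim {0 :: nat \<Rightarrow> 'a::field} = 0"
  using V.dim_le_card[of "{0}" "{}"] by simp

lemma mat_apply_matrix_of:
  assumes F: "lin F" "F ` coord_space p \<subseteq> coord_space q" and u: "u \<in> coord_space p"
  shows "mat_apply q p (\<lambda>i j. F (unit_vec j) i) u = F u"
proof -
  have "F u = (\<Sum>j<p. fscale (u j) (F (unit_vec j)))"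
    by (subst coord_space_expand[OF u]) (simp add: VP.linear_sum[OF F(1)] VP.linear_scale[OF F(1)])
  moreover have "F u \<in> coord_space q"
    using F(2) u by blast
  ultimately show ?thesis
    by (auto simp: mat_apply_def fun_eq_iff sum_fun_apply mult.commute coord_space_def)
qed

lemma linear_map_with_kernel_in_span:
  assumes B: "V.independent B" "coord_space n \<subseteq> V.span B"
    and C: "finite C" "C \<subseteq> B" "card C \<le> b"
  obtains \<Phi> :: "(nat \<Rightarrow> 'a::field) \<Rightarrow> (nat \<Rightarrow> 'a)"
  where "lin \<Phi>" "\<Phi> ` coord_space n \<subseteq> coord_space b"
    "\<And>x. x \<in> coord_space n \<Longrightarrow> \<Phi> x = 0 \<Longrightarrow> x \<in> V.span (B - C)"
proof -
  obtain h where h: "bij_betw h C {..<card C}"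
    using ex_bij_betw_finite_nat[OF C(1)] atLeast0LessThan by metis
  define \<Phi> where "\<Phi> = VP.construct B (\<lambda>v. if v \<in> C then unit_vec (h v) else 0)"
  have lin: "lin \<Phi>"
    unfolding \<Phi>_def by (rule VP.linear_construct[OF B(1)])
  have \<Phi>_rest: "\<Phi> v = 0" if "v \<in> B - C" for v
    using that unfolding \<Phi>_def by (subst VP.construct_basis[OF B(1)]) auto
  have \<Phi>_C: "\<Phi> w = unit_vec (h w)" if "w \<in> C" for w
    using that C(2) unfolding \<Phi>_def by (subst VP.construct_basis[OF B(1)]) auto
  have "\<Phi> ` coord_space n \<subseteq> V.span (\<Phi> ` B)"
    using B(2) VP.linear_span_image[OF lin] by blast
  also have "\<dots> \<subseteq> coord_space b"
  proof (rule V.span_minimal[OF _ subspace_coord_space], safe)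
    fix v assume "v \<in> B"
    then consider "v \<in> B - C" | "v \<in> C"
      by auto
    then show "\<Phi> v \<in> coord_space b"
    proof cases
      case 1
      then show ?thesis
        using \<Phi>_rest by (simp add: coord_space_def)
    next
      case 2
      then have "h v < b"
        using h C(3) bij_betwE by fastforce
      then show ?thesis
        using 2 \<Phi>_C by (simp add: coord_space_def unit_vec_def)
    qed
  qed
  finally have image_in: "\<Phi> ` coord_space n \<subseteq> coord_space b" .
  have inj: "inj_on \<Phi> C"
  proof (rule inj_onI)
    fix u w assume "u \<in> C" "w \<in> C" "\<Phi> u = \<Phi> w"
    then have "h u = h w"
      using \<Phi>_C inj_eq[OF inj_unit_vec] by metis
    with \<open>u \<in> C\<close> \<open>w \<in> C\<close> show "u = w"
      using h by (auto simp: bij_betw_def inj_on_def)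
  qed
  have "\<Phi> ` C = unit_vec ` h ` C"
    using \<Phi>_C by (auto simp: image_image)
  then have indep: "V.independent (\<Phi> ` C)"
    using independent_unit_vec[OF finite_imageI[OF C(1)], of h] by simp
  have "x \<in> V.span (B - C)" if x: "x \<in> coord_space n" "\<Phi> x = 0" for x
  proof -
    have span: "x \<in> V.span ((B - C) \<union> C)"
      using x(1) B(2) C(2) by (auto simp: Un_absorb2)
    show ?thesis
      by (rule VP.linear_eq_0_in_span_Un[OF lin C(1) inj indep \<Phi>_rest span x(2)])
  qed
  with lin image_in show thesis
    by (rule that)
qed

lemma linear_map_with_kernel_in:
  assumes K: "V.subspace K" "K \<subseteq> coord_space n" and n: "n \<le> V.dim K + b"
  obtains \<Phi> :: "(nat \<Rightarrow> 'a::field) \<Rightarrow> (nat \<Rightarrow> 'a)"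
  where "lin \<Phi>" "\<Phi> ` coord_space n \<subseteq> coord_space b"
    "\<And>x. x \<in> coord_space n \<Longrightarrow> \<Phi> x = 0 \<Longrightarrow> x \<in> K"
proof -
  obtain B0 where B0: "finite B0" "B0 \<subseteq> K" "V.independent B0" "K \<subseteq> V.span B0" "card B0 = V.dim K"
    using V.fin_dim_basis[OF fin_dim_subset_coord_space[OF K(2)]] by blast
  obtain B where B: "B0 \<subseteq> B" "B \<subseteq> coord_space n" "V.independent B" "coord_space n \<subseteq> V.span B"
    using V.maximal_independent_subset_extend[of B0 "coord_space n"] B0(2,3) K(2) by blast
  have "finite B"
    using V.independent_span_bound[OF _ B(3)] B(2) coord_space_eq_span by blast
  moreover have "card B = n"
    using V.basis_card_eq_dim[OF B(2,4,3)] dim_coord_space by simp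
  ultimately have "finite (B - B0)" "card (B - B0) \<le> b"
    using card_Diff_subset[OF B0(1) B(1)] B0(5) n by auto
  then obtain \<Phi> where \<Phi>: "lin \<Phi>" "\<Phi> ` coord_space n \<subseteq> coord_space b"
    "\<And>x. x \<in> coord_space n \<Longrightarrow> \<Phi> x = 0 \<Longrightarrow> x \<in> V.span (B - (B - B0))"
    using linear_map_with_kernel_in_span[OF B(3,4) _ Diff_subset] by metis
  have "V.span (B - (B - B0)) \<subseteq> K"
    using B(1) V.span_minimal[OF B0(2) K(1)] by (simp add: double_diff)
  then have "x \<in> K" if "x \<in> coord_space n" "\<Phi> x = 0" for x
    using \<Phi>(3)[OF that] by (rule subsetD)
  then show thesis
    by (rule that[OF \<Phi>(1,2)])
qed

text \<open>The space (F^a)^m is encoded as F^(m*a): block k of a vector consists of the coordinates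
  congruent to k modulo m.\<close>

definition put_block :: "nat \<Rightarrow> nat \<Rightarrow> (nat \<Rightarrow> 'a::zero) \<Rightarrow> (nat \<Rightarrow> 'a)" where
  "put_block m k u = (\<lambda>i. if i mod m = k then u (i div m) else 0)"

definition get_block :: "nat \<Rightarrow> nat \<Rightarrow> (nat \<Rightarrow> 'a) \<Rightarrow> (nat \<Rightarrow> 'a)" where
  "get_block m k v = (\<lambda>j. v (j * m + k))"

lemma linear_put_block: "lin (put_block m k)"
  by (rule linI) (auto simp: put_block_def)

lemma linear_get_block: "lin (get_block m k)"
  by (rule linI) (auto simp: get_block_def)

lemma get_put_block: "j < m \<Longrightarrow> get_block m j (put_block m k u) = (if j = k then u else 0)"
  by (auto simp: get_block_def put_block_def fun_eq_iff)

lemma put_block_in_coord_space: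
  assumes "k < m" "u \<in> coord_space a"
  shows "put_block m k u \<in> coord_space (m * a)"
proof -
  have "a \<le> i div m" if "m * a \<le> i" for i
    using that assms(1) by (simp add: less_eq_div_iff_mult_less_eq mult.commute)
  then show ?thesis
    using assms(2) by (auto simp: put_block_def coord_space_def)
qed

lemma sum_put_get_block:
  assumes "0 < m"
  shows "(\<Sum>k<m. put_block m k (get_block m k v)) = v"
proof
  fix i
  have "(\<Sum>k<m. put_block m k (get_block m k v)) i = (\<Sum>k<m. if i mod m = k then v (i div m * m + k) else 0)"
    by (simp add: sum_fun_apply put_block_def get_block_def)
  also have "\<dots> = v i"
    using assms by (simp add: sum.delta)
  finally show "(\<Sum>k<m. put_block m k (get_block m k v)) i = v i" .
qed

lemma independent_put_blocks:
  fixes E :: "(nat \<Rightarrow> 'a::field) set" and m :: nat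
  assumes E: "V.independent E" "finite E"
  defines "Q \<equiv> (\<lambda>(k, e). put_block m k e) ` ({..<m} \<times> E)"
  shows "V.independent Q" "card Q = m * card E"
proof -
  have inj: "inj_on (\<lambda>(k, e). put_block m k e) ({..<m} \<times> E)"
  proof (rule inj_onI, clarify)
    fix k e k' e' assume ke: "k < m" "e \<in> E" "k' < m" "e' \<in> E"
      and eq: "put_block m k e = put_block m k' e'"
    have "e \<noteq> 0"
      using ke(2) E(1) V.dependent_zero by blast
    moreover have "e = (if k = k' then e' else 0)"
      using arg_cong[OF eq, of "get_block m k"] ke(1) by (simp add: get_put_block)
    ultimately show "k = k' \<and> e = e'"
      by (cases "k = k'") auto
  qed
  then show "card Q = m * card E"
    by (simp add: Q_def card_image card_cartesian_product)
  show "V.independent Q"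
  proof (rule V.independent_if_scalars_zero)
    show "finite Q"
      using E(2) by (simp add: Q_def)
    fix c :: "(nat \<Rightarrow> 'a) \<Rightarrow> 'a" and q assume sum: "(\<Sum>q\<in>Q. fscale (c q) q) = 0" and "q \<in> Q"
    then obtain j e where je: "j < m" "e \<in> E" "q = put_block m j e"
      by (auto simp: Q_def)
    have "(\<Sum>q\<in>Q. fscale (c q) q)
        = (\<Sum>(k, e)\<in>{..<m} \<times> E. fscale (c (put_block m k e)) (put_block m k e))"
      unfolding Q_def by (subst sum.reindex[OF inj]) (simp add: split_def)
    also have "\<dots> = (\<Sum>k<m. put_block m k (\<Sum>e\<in>E. fscale (c (put_block m k e)) e))"
      by (simp add: sum.cartesian_product[symmetric]
          VP.linear_sum[OF linear_put_block] VP.linear_scale[OF linear_put_block])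
    finally have "get_block m j (\<Sum>k<m. put_block m k (\<Sum>e\<in>E. fscale (c (put_block m k e)) e)) = 0"
      using sum VP.linear_0[OF linear_get_block] by simp
    then have "(\<Sum>e\<in>E. fscale (c (put_block m j e)) e) = 0"
      using je(1) by (simp add: VP.linear_sum[OF linear_get_block] get_put_block)
    then show "c q = 0"
      using V.independentD[OF E(1,2) subset_refl, of "\<lambda>e. c (put_block m j e)"] je(2,3) by simp
  qed
qed

lemma dim_block_power_ge:
  assumes U: "V.subspace U" "U \<subseteq> coord_space a"
  shows "m * V.dim U \<le> V.dim {v \<in> coord_space (m * a). \<forall>k<m. get_block m k v \<in> U}"
proof -
  obtain E where E: "finite E" "E \<subseteq> U" "V.independent E" "card E = V.dim U"
    using V.fin_dim_basis[OF fin_dim_subset_coord_space[OF U(2)]] by metis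
  let ?Q = "(\<lambda>(k, e). put_block m k e) ` ({..<m} \<times> E)"
  let ?P = "{v \<in> coord_space (m * a). \<forall>k<m. get_block m k v \<in> U}"
  have "?Q \<subseteq> ?P"
    using E(2) U(2) V.subspace_0[OF U(1)]
    by (auto simp: get_put_block intro!: put_block_in_coord_space)
  then have "card ?Q \<le> V.dim ?P"
    by (intro V.card_le_dim_fin_dim[OF independent_put_blocks(1)[OF E(3,1)]]
        fin_dim_subset_coord_space[of _ "m * a"]) auto
  then show ?thesis
    using independent_put_blocks(2)[OF E(3,1)] E(4) by simp
qed

definition stack :: "nat \<Rightarrow> (nat \<Rightarrow> (nat \<Rightarrow> 'a::field) \<Rightarrow> (nat \<Rightarrow> 'a)) \<Rightarrow> (nat \<Rightarrow> 'a) \<Rightarrow> (nat \<Rightarrow> 'a)" where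
  "stack m g x = (\<Sum>k<m. put_block m k (g k x))"

lemma get_block_stack: "j < m \<Longrightarrow> get_block m j (stack m g x) = g j x"
  by (simp add: stack_def VP.linear_sum[OF linear_get_block] get_put_block)

lemma linear_stack: "(\<And>k. k < m \<Longrightarrow> lin (g k)) \<Longrightarrow> lin (stack m g)"
  unfolding stack_def[abs_def]
  by (rule VP.linear_compose_sum)
    (auto intro!: Vector_Spaces.linear_compose[OF _ linear_put_block, unfolded o_def])

lemma stack_in_coord_space:
  "(\<And>k. k < m \<Longrightarrow> g k x \<in> coord_space a) \<Longrightarrow> stack m g x \<in> coord_space (m * a)"
  unfolding stack_def by (rule V.subspace_sum[OF subspace_coord_space]) (simp add: put_block_in_coord_space)

definition rep_maps :: "nat \<Rightarrow> nat \<Rightarrow> nat \<Rightarrow> (nat \<Rightarrow> (nat \<Rightarrow> 'a::field) \<Rightarrow> (nat \<Rightarrow> 'a)) \<Rightarrow> bool" where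
  "rep_maps m a b F \<longleftrightarrow> (\<forall>k<m. lin (F k) \<and> F k ` coord_space a \<subseteq> coord_space b)"

definition expanding :: "nat \<Rightarrow> real \<Rightarrow> nat \<Rightarrow> (nat \<Rightarrow> (nat \<Rightarrow> 'a::field) \<Rightarrow> (nat \<Rightarrow> 'a)) \<Rightarrow> bool" where
  "expanding m \<beta> a F \<longleftrightarrow> (\<forall>W. V.subspace W \<longrightarrow> W \<subseteq> coord_space a \<longrightarrow> W \<noteq> {0} \<longrightarrow>
     \<beta> * V.dim W < V.dim (V.span (\<Union>k<m. F k ` W)))"

lemma expanding_coord_space_0: "expanding m \<beta> 0 F"
proof -
  have "W \<subseteq> {0}" if "W \<subseteq> coord_space 0" for W :: "(nat \<Rightarrow> 'a) set"
    using that by (auto simp: coord_space_def fun_eq_iff)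
  then show ?thesis
    unfolding expanding_def using V.subspace_0 by blast
qed

lemma expanding_dim_less:
  assumes "expanding m \<beta> a F" "V.subspace W" "W \<subseteq> coord_space a" "W \<noteq> {0}"
    and "V.fin_dim U" "\<And>k. k < m \<Longrightarrow> F k ` W \<subseteq> U"
  shows "\<beta> * V.dim W < V.dim U"
proof -
  have "\<beta> * V.dim W < V.dim (V.span (\<Union>k<m. F k ` W))"
    using assms(1-4) unfolding expanding_def by blast
  moreover have "V.dim (V.span (\<Union>k<m. F k ` W)) \<le> V.dim U"
    using assms(5,6) by (intro V.dim_mono_fin_dim V.span_mono) auto
  ultimately show ?thesis
    by (meson of_nat_le_iff order_less_le_trans)
qed

lemma expanding_kernel:
  assumes "expanding m \<beta> a g" "0 \<le> \<beta>" "\<And>k. k < m \<Longrightarrow> lin (g k)"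
    and "x \<in> coord_space a" "\<And>k. k < m \<Longrightarrow> g k x = 0"
  shows "x = 0"
proof (rule ccontr)
  assume "x \<noteq> 0"
  have "V.span {x} \<subseteq> coord_space a"
    using assms(4) by (intro V.span_minimal subspace_coord_space) auto
  moreover have "V.span {x} \<noteq> {0}"
    using \<open>x \<noteq> 0\<close> V.span_base[of x "{x}"] by auto
  moreover have "V.fin_dim {0 :: nat \<Rightarrow> 'a}"
    by (rule exI[of _ "{}"]) simp
  moreover have "g k ` V.span {x} \<subseteq> {0}" if "k < m" for k
    using VP.linear_eq_0_on_span[OF assms(3)[OF that], of "{x}"] assms(5)[OF that] by auto
  ultimately have "\<beta> * V.dim (V.span {x}) < V.dim {0 :: nat \<Rightarrow> 'a}"
    by (rule expanding_dim_less[OF assms(1) V.subspace_span])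
  with assms(2) show False
    by (simp add: dim_zero_space mult_less_0_iff)
qed

lemma dim_image_stack_ge:
  assumes g: "expanding m \<beta> \<kappa> g" "0 \<le> \<beta>" "\<And>k. k < m \<Longrightarrow> lin (g k)"
  shows "\<kappa> \<le> V.dim (stack m g ` coord_space \<kappa>)"
proof -
  have "{x \<in> coord_space \<kappa>. stack m g x = 0} \<subseteq> {0}"
  proof safe
    fix x assume x: "x \<in> coord_space \<kappa>" "stack m g x = 0"
    have "g k x = 0" if "k < m" for k
      using get_block_stack[OF that, of g x, symmetric] x(2) by (simp add: get_block_def fun_eq_iff)
    then show "x = 0"
      using expanding_kernel[OF g x(1)] by blast
  qed
  then have "V.dim {x \<in> coord_space \<kappa>. stack m g x = 0} = 0"
    using V.dim_eq_0_fin_dim[OF fin_dim_subset_coord_space[of _ \<kappa>]] by auto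
  moreover have "lin (stack m g)"
    by (rule linear_stack[OF g(3)])
  ultimately show ?thesis
    using VP.dim_le_dim_image_plus_dim_kernel[of "stack m g", OF _ subspace_coord_space[of \<kappa>]
        fin_dim_subset_coord_space[OF order.refl]]
    by (simp add: dim_coord_space)
qed

lemma reflection_inequality:
  fixes \<beta> m e s n :: real
  assumes "\<beta> * (m - \<beta>) = 1" "0 \<le> \<beta>" "m * e \<le> s + n" "\<beta> * n < e"
  shows "\<beta> * e < s"
proof -
  have "0 < m - \<beta>"
    using assms(1,2) mult_nonneg_nonpos[of \<beta> "m - \<beta>"] by linarith
  have "n = (\<beta> * (m - \<beta>)) * n"
    using assms(1) by simp
  also have "\<dots> = (m - \<beta>) * (\<beta> * n)"
    by (simp only: ac_simps)
  also have "\<dots> < (m - \<beta>) * e"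
    using \<open>0 < m - \<beta>\<close> assms(4) by simp
  finally have "n < (m - \<beta>) * e" .
  moreover have "\<beta> * e = m * e - (m - \<beta>) * e"
    by (simp add: algebra_simps)
  ultimately show ?thesis
    using assms(3) by linarith
qed

lemma dim_reflection_ge:
  assumes "0 < m" and \<Phi>: "lin \<Phi>" "\<Phi> ` coord_space (m * a) \<subseteq> coord_space b"
    and U: "V.subspace U" "U \<subseteq> coord_space a"
  shows "m * V.dim U \<le> V.dim (V.span (\<Union>k<m. (\<Phi> \<circ> put_block m k) ` U))
           + V.dim {v \<in> coord_space (m * a). (\<forall>k<m. get_block m k v \<in> U) \<and> \<Phi> v = 0}"
proof -
  define P where "P = {v \<in> coord_space (m * a). \<forall>k<m. get_block m k v \<in> U}"
  define S where "S = V.span (\<Union>k<m. (\<Phi> \<circ> put_block m k) ` U)"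
  have P: "V.subspace P" "P \<subseteq> coord_space (m * a)"
    unfolding P_def using VP.subspace_common_preimage[OF U(1) subspace_coord_space linear_get_block]
    by auto
  have "\<Phi> v \<in> S" if "v \<in> P" for v
  proof -
    have "\<Phi> v = \<Phi> (\<Sum>k<m. put_block m k (get_block m k v))"
      by (simp add: sum_put_get_block[OF \<open>0 < m\<close>])
    also have "\<dots> = (\<Sum>k<m. (\<Phi> \<circ> put_block m k) (get_block m k v))"
      by (simp add: VP.linear_sum[OF \<Phi>(1)])
    also have "\<dots> \<in> S"
      unfolding S_def using that by (intro V.span_sum V.span_base) (auto simp: P_def)
    finally show ?thesis .
  qed
  then have "\<Phi> ` P \<subseteq> V.span S"
    using V.span_superset by blast
  moreover have "S \<subseteq> coord_space b"
    unfolding S_def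
  proof (intro V.span_minimal subspace_coord_space, safe)
    fix k u assume "k < m" "u \<in> U"
    then have "put_block m k u \<in> coord_space (m * a)"
      using U(2) by (intro put_block_in_coord_space) auto
    then show "(\<Phi> \<circ> put_block m k) u \<in> coord_space b"
      using \<Phi>(2) by auto
  qed
  ultimately have "V.dim (\<Phi> ` P) \<le> V.dim S"
    by (intro V.dim_mono_fin_dim fin_dim_subset_coord_space)
  moreover have "m * V.dim U \<le> V.dim P"
    unfolding P_def by (rule dim_block_power_ge[OF U])
  moreover have "V.dim P \<le> V.dim (\<Phi> ` P)
      + V.dim {v \<in> coord_space (m * a). (\<forall>k<m. get_block m k v \<in> U) \<and> \<Phi> v = 0}"
    using VP.dim_le_dim_image_plus_dim_kernel[OF \<Phi>(1) P(1) fin_dim_subset_coord_space[OF P(2)]]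
    by (simp add: P_def conj_assoc)
  ultimately show ?thesis
    unfolding S_def by linarith
qed

lemma dim_reflection_kernel_less:
  assumes \<beta>: "0 \<le> \<beta>" and g: "rep_maps m \<kappa> a g" "expanding m \<beta> \<kappa> g"
    and ker: "\<And>v. v \<in> coord_space (m * a) \<Longrightarrow> \<Phi> v = 0 \<Longrightarrow> v \<in> stack m g ` coord_space \<kappa>"
    and U: "V.subspace U" "U \<subseteq> coord_space a" "U \<noteq> {0}"
  shows "\<beta> * V.dim {v \<in> coord_space (m * a). (\<forall>k<m. get_block m k v \<in> U) \<and> \<Phi> v = 0} < V.dim U"
proof -
  define N where "N = {v \<in> coord_space (m * a). (\<forall>k<m. get_block m k v \<in> U) \<and> \<Phi> v = 0}"
  define W where "W = {x \<in> coord_space \<kappa>. \<forall>k<m. g k x \<in> U}"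
  have g_lin: "\<And>k. k < m \<Longrightarrow> lin (g k)"
    using g(1) by (simp add: rep_maps_def)
  have W: "V.subspace W" "W \<subseteq> coord_space \<kappa>"
    unfolding W_def using VP.subspace_common_preimage[OF U(1) subspace_coord_space g_lin] by auto
  have stack_W: "stack m g ` W \<subseteq> coord_space (m * a)"
    using W(2) g(1) by (auto simp: rep_maps_def intro!: stack_in_coord_space)
  have "N \<subseteq> stack m g ` W"
  proof
    fix v assume v: "v \<in> N"
    then obtain x where "x \<in> coord_space \<kappa>" "v = stack m g x"
      using ker by (auto simp: N_def)
    with v show "v \<in> stack m g ` W"
      by (auto simp: N_def W_def get_block_stack)
  qed
  then have "V.dim N \<le> V.dim (stack m g ` W)"
    by (rule V.dim_mono_fin_dim[OF subset_trans[OF _ V.span_superset] fin_dim_subset_coord_space[OF stack_W]])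
  also have "\<dots> \<le> V.dim W"
    by (rule VP.dim_image_le_fin_dim[OF linear_stack[OF g_lin] fin_dim_subset_coord_space[OF W(2)]])
  finally have "\<beta> * V.dim N \<le> \<beta> * V.dim W"
    using \<beta> by (simp add: mult_left_mono)
  also have "\<beta> * V.dim W < V.dim U"
  proof (cases "W = {0}")
    case True
    have "\<not> U \<subseteq> {0}"
      using U(3) V.subspace_0[OF U(1)] by auto
    then have "V.dim U \<noteq> 0"
      using V.dim_eq_0_fin_dim[OF fin_dim_subset_coord_space[OF U(2)]] by simp
    then show ?thesis
      using True by (simp add: dim_zero_space)
  next
    case False
    show ?thesis
      by (rule expanding_dim_less[OF g(2) W False fin_dim_subset_coord_space[OF U(2)]])
        (auto simp: W_def)
  qed
  finally show ?thesis
    unfolding N_def .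
qed

lemma expanding_reflection:
  assumes \<beta>: "\<beta> * (real m - \<beta>) = 1" "0 \<le> \<beta>" and "0 < m"
    and g: "rep_maps m \<kappa> a g" "expanding m \<beta> \<kappa> g"
    and \<Phi>: "lin \<Phi>" "\<Phi> ` coord_space (m * a) \<subseteq> coord_space b"
    and ker: "\<And>v. v \<in> coord_space (m * a) \<Longrightarrow> \<Phi> v = 0 \<Longrightarrow> v \<in> stack m g ` coord_space \<kappa>"
  shows "expanding m \<beta> a (\<lambda>k. \<Phi> \<circ> put_block m k)"
  unfolding expanding_def
proof (intro allI impI)
  fix U :: "(nat \<Rightarrow> 'a) set" assume U: "V.subspace U" "U \<subseteq> coord_space a" "U \<noteq> {0}"
  let ?S = "V.span (\<Union>k<m. (\<Phi> \<circ> put_block m k) ` U)"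
  let ?N = "{v \<in> coord_space (m * a). (\<forall>k<m. get_block m k v \<in> U) \<and> \<Phi> v = 0}"
  have "real (m * V.dim U) \<le> real (V.dim ?S + V.dim ?N)"
    by (rule of_nat_mono[OF dim_reflection_ge[OF \<open>0 < m\<close> \<Phi> U(1,2)]])
  then have "real m * V.dim U \<le> real (V.dim ?S) + real (V.dim ?N)"
    by simp
  then show "\<beta> * V.dim U < V.dim ?S"
    by (rule reflection_inequality[OF \<beta> _ dim_reflection_kernel_less[OF \<beta>(2) g ker U]])
qed

lemma expanding_step:
  fixes g :: "nat \<Rightarrow> (nat \<Rightarrow> 'a::field) \<Rightarrow> (nat \<Rightarrow> 'a)"
  assumes \<beta>: "\<beta> * (real m - \<beta>) = 1" "0 \<le> \<beta>" and "0 < m"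
    and g: "rep_maps m \<kappa> a g" "expanding m \<beta> \<kappa> g" and "m * a \<le> \<kappa> + b"
  shows "\<exists>F :: nat \<Rightarrow> (nat \<Rightarrow> 'a) \<Rightarrow> (nat \<Rightarrow> 'a). rep_maps m a b F \<and> expanding m \<beta> a F"
proof -
  have g_lin: "\<And>k. k < m \<Longrightarrow> lin (g k)"
    using g(1) by (simp add: rep_maps_def)
  define K where "K = stack m g ` coord_space \<kappa>"
  have K: "V.subspace K" "K \<subseteq> coord_space (m * a)"
    unfolding K_def using VP.linear_subspace_image[OF linear_stack[OF g_lin] subspace_coord_space] g(1)
    by (auto simp: rep_maps_def image_subset_iff intro!: stack_in_coord_space)
  have "\<kappa> \<le> V.dim K"
    unfolding K_def by (rule dim_image_stack_ge[OF g(2) \<beta>(2) g_lin])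
  with \<open>m * a \<le> \<kappa> + b\<close> have "m * a \<le> V.dim K + b"
    by linarith
  then obtain \<Phi> where \<Phi>: "lin \<Phi>" "\<Phi> ` coord_space (m * a) \<subseteq> coord_space b"
    "\<And>v. v \<in> coord_space (m * a) \<Longrightarrow> \<Phi> v = 0 \<Longrightarrow> v \<in> K"
    using linear_map_with_kernel_in[OF K] by metis
  have "rep_maps m a b (\<lambda>k. \<Phi> \<circ> put_block m k)"
    unfolding rep_maps_def
  proof (intro allI impI conjI)
    fix k assume "k < m"
    show "lin (\<Phi> \<circ> put_block m k)"
      by (rule Vector_Spaces.linear_compose[OF linear_put_block \<Phi>(1)])
    show "(\<Phi> \<circ> put_block m k) ` coord_space a \<subseteq> coord_space b"
      using put_block_in_coord_space[OF \<open>k < m\<close>] \<Phi>(2) by (auto simp: image_subset_iff)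
  qed
  moreover have "expanding m \<beta> a (\<lambda>k. \<Phi> \<circ> put_block m k)"
    using expanding_reflection[OF \<beta> \<open>0 < m\<close> g \<Phi>(1,2)] \<Phi>(3) by (simp add: K_def)
  ultimately show ?thesis
    by blast
qed

lemma expanding_exists:
  assumes \<beta>: "\<beta> * (real m - \<beta>) = 1" "1 \<le> \<beta>" and "0 < m"
    and "\<beta> * a < b"
  shows "\<exists>F :: nat \<Rightarrow> (nat \<Rightarrow> 'a::field) \<Rightarrow> (nat \<Rightarrow> 'a). rep_maps m a b F \<and> expanding m \<beta> a F"
  using \<open>\<beta> * a < b\<close>
proof (induction a arbitrary: b rule: less_induct)
  case (less a)
  show ?case
  proof (cases "a = 0")
    case True
    have "rep_maps m 0 b (\<lambda>k x. 0 :: nat \<Rightarrow> 'a)"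
      by (auto simp: rep_maps_def VP.linear_zero coord_space_def)
    then show ?thesis
      using True expanding_coord_space_0 by blast
  next
    case False
    define \<kappa> where "\<kappa> = m * a - b"
    have "\<beta> * \<kappa> < a"
    proof (cases "b \<le> m * a")
      case True
      then have "real \<kappa> = real m * a - b"
        by (simp add: \<kappa>_def of_nat_diff)
      also have "\<dots> < (real m - \<beta>) * a"
        using less.prems by (simp add: algebra_simps)
      finally have "\<beta> * \<kappa> < \<beta> * ((real m - \<beta>) * a)"
        using \<beta>(2) by simp
      also have "\<dots> = a"
        using \<beta>(1) by (simp add: mult.assoc[symmetric])
      finally show ?thesis .
    qed (use False \<kappa>_def in simp)
    moreover have "real \<kappa> \<le> \<beta> * \<kappa>"
      using \<beta>(2) by (simp add: mult_le_cancel_right1)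
    ultimately have "\<kappa> < a" "\<beta> * \<kappa> < a"
      by linarith+
    then obtain g :: "nat \<Rightarrow> (nat \<Rightarrow> 'a) \<Rightarrow> (nat \<Rightarrow> 'a)"
      where "rep_maps m \<kappa> a g" "expanding m \<beta> \<kappa> g"
      using less.IH by blast
    moreover have "m * a \<le> \<kappa> + b"
      by (simp add: \<kappa>_def)
    moreover have "0 \<le> \<beta>"
      using \<beta>(2) by simp
    ultimately show ?thesis
      using expanding_step[OF \<beta>(1) _ \<open>0 < m\<close>] by blast
  qed
qed

lemma expanding_subrep_bound:
  assumes F: "rep_maps m (fst d) (snd d) F" "expanding m \<beta> (fst d) F"
    and sub: "has_subrep m d (\<lambda>k i j. F k (unit_vec j) i) e" and "0 < fst e"
  shows "\<beta> * fst e < snd e"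
proof -
  obtain U1 U2 where U1: "V.subspace U1" "U1 \<subseteq> coord_space (fst d)" "V.dim U1 = fst e"
    and U2: "U2 \<subseteq> coord_space (snd d)" "V.dim U2 = snd e"
    and inv: "\<forall>k<m. \<forall>u\<in>U1. mat_apply (snd d) (fst d) (\<lambda>i j. F k (unit_vec j) i) u \<in> U2"
    using sub unfolding has_subrep_def subspace_of_dim_def by blast
  have "U1 \<noteq> {0}"
    using U1(3) \<open>0 < fst e\<close> by (auto simp: dim_zero_space)
  moreover have "F k ` U1 \<subseteq> U2" if "k < m" for k
  proof safe
    fix u assume "u \<in> U1"
    then have "mat_apply (snd d) (fst d) (\<lambda>i j. F k (unit_vec j) i) u = F k u"
      using F(1) that U1(2) by (intro mat_apply_matrix_of) (auto simp: rep_maps_def)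
    then show "F k u \<in> U2"
      using inv that \<open>u \<in> U1\<close> by metis
  qed
  ultimately show ?thesis
    using expanding_dim_less[OF F(2) U1(1,2) _ fin_dim_subset_coord_space[OF U2(1)]] U1(3) U2(2)
    by simp
qed

lemma quadratic_larger_root:
  fixes x :: real
  assumes "2 \<le> x"
  defines "\<beta> \<equiv> (x + sqrt (x\<^sup>2 - 4)) / 2"
  shows "\<beta> * (x - \<beta>) = 1" "1 \<le> \<beta>"
proof -
  have "4 \<le> x\<^sup>2"
    using power_mono[OF assms(1), of 2] by simp
  then have s: "(sqrt (x\<^sup>2 - 4))\<^sup>2 = x\<^sup>2 - 4" "0 \<le> sqrt (x\<^sup>2 - 4)"
    by simp_all
  have "\<beta> * (x - \<beta>) = (x\<^sup>2 - (sqrt (x\<^sup>2 - 4))\<^sup>2) / 4"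
    by (simp add: \<beta>_def field_simps power2_eq_square)
  then show "\<beta> * (x - \<beta>) = 1"
    using s(1) by simp
  have "2 \<le> x + sqrt (x\<^sup>2 - 4)"
    using assms(1) s(2) by linarith
  then show "1 \<le> \<beta>"
    by (simp add: \<beta>_def)
qed

theorem lemma3p3:
  fixes m :: nat and d e :: "nat \<times> nat"
  assumes "m \<ge> 2"
    and "e \<noteq> (0, 0)"
    and "fst e \<le> fst d" and "snd e \<le> snd d"
    and "real (snd d) > (real m + sqrt (real m ^ 2 - 4)) / 2 * real (fst d)"
    and "embeds TYPE('a::alg_closed_field) m e d"
  shows "real (snd e) > (real m + sqrt (real m ^ 2 - 4)) / 2 * real (fst e)"
proof -
  define \<beta> where "\<beta> = (real m + sqrt (real m ^ 2 - 4)) / 2"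
  have \<beta>: "\<beta> * (real m - \<beta>) = 1" "1 \<le> \<beta>"
    using quadratic_larger_root[of "real m"] assms(1) by (simp_all add: \<beta>_def)
  obtain F :: "nat \<Rightarrow> (nat \<Rightarrow> 'a) \<Rightarrow> (nat \<Rightarrow> 'a)"
    where F: "rep_maps m (fst d) (snd d) F" "expanding m \<beta> (fst d) F"
    using expanding_exists[OF \<beta>] assms(1,5) by (auto simp: \<beta>_def)
  show ?thesis
  proof (cases "fst e = 0")
    case True
    with assms(2) have "0 < snd e"
      by (cases e) auto
    with True show ?thesis
      by simp
  next
    case False
    have "has_subrep m d (\<lambda>k i j. F k (unit_vec j) i) e"
      using assms(6) by (simp add: embeds_def)
    with False show ?thesis
      using expanding_subrep_bound[OF F] by (simp add: \<beta>_def)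
  qed
qed

end
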